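(* Let $c>0$ and let $\nu,\tilde\nu$ be probability measures on $\mathbb R_+$ different from $\boldsymbol d_0$. Suppose that for $i=1,2$ the triple $(\boldsymbol{\tilde\delta}_i,\boldsymbol\delta_i,\boldsymbol x_i)$ satisfies: $\boldsymbol{\tilde\delta}_i\in\widetilde{\mathcal D}$, $\boldsymbol x_i\in\mathbb R\setminus\{0\}$, $\boldsymbol\delta_i=c\int\frac{t}{-\boldsymbol x_i(1+\boldsymbol{\tilde\delta}_i t)}\nu(dt)\in\mathcal D$, $\boldsymbol{\tilde\delta}_i=\int\frac{t}{-\boldsymbol x_i(1+\boldsymbol\delta_i t)}\tilde\nu(dt)$, and $$1-\boldsymbol x_i^2\Bigl(c\int\frac{t^2}{\boldsymbol x_i^2(1+\boldsymbol{\tilde\delta}_i t)^2}\nu(dt)\Bigr)\Bigl(\int\frac{t^2}{\boldsymbol x_i^2(1+\boldsymbol\delta_i t)^2}\tilde\nu(dt)\Bigr)>0.$$ If $\boldsymbol{\tilde\delta}_1<\boldsymbol{\tilde\delta}_2$, $\boldsymbol x_1\boldsymbol x_2>0$, and $[\min(\boldsymbol\delta_1,\boldsymbol\delta_2),\max(\boldsymbol\delta_1,\boldsymbol\delta_2)]\subset\mathcal D$, then $\boldsymbol x_1<\boldsymbol x_2$.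
   Context: $\boldsymbol d_0$ is the Dirac mass at $0$. Define $\mathcal D=\{0\}\cup\{\boldsymbol\delta\in\mathbb R\setminus\{0\}:-\boldsymbol\delta^{-1}\notin\operatorname{supp}(\tilde\nu)\}$ if $\operatorname{supp}(\tilde\nu)$ is compact and $\mathcal D=\{\boldsymbol\delta\in\mathbb R\setminus\{0\}:-\boldsymbol\delta^{-1}\notin\operatorname{supp}(\tilde\nu)\}$ otherwise; $\widetilde{\mathcal D}$ is defined in the same way with $\nu$ in place of $\tilde\nu$. *)

theory Defs
  imports "HOL-Probability.Probability"
begin

definition msupp :: "real measure \<Rightarrow> real set" where
  "msupp M = {x. \<forall>U. open U \<and> x \<in> U \<longrightarrow> emeasure M U \<noteq> 0}"

text \<open>The set D associated with a measure mu (D uses the tilde measure, D-tilde uses nu).\<close>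
definition domD :: "real measure \<Rightarrow> real set" where
  "domD mu = (if compact (msupp mu) then {0} else {}) \<union>
              {d. d \<noteq> 0 \<and> - inverse d \<notin> msupp mu}"

definition prob_on_Rplus :: "real measure \<Rightarrow> bool" where
  "prob_on_Rplus M \<longleftrightarrow> prob_space M \<and> sets M = sets borel \<and> emeasure M {0..} = 1"

end

theory Submission
  imports Defs
begin

text \<open>Write \<open>G(s) = \<integral> t/(1+st) d\<nu>\<close>, \<open>H(s) = \<integral> t/(1+st) d\<nu>\<^sub>t\<close> and let \<open>P\<close>, \<open>Q\<close> be the
cross moments \<open>\<integral> t/(1+\<delta>\<^sub>1\<^sup>~t) \<cdot> t/(1+\<delta>\<^sub>2\<^sup>~t)\<close> under \<open>\<nu>\<close> and \<open>\<integral> t/(1+\<delta>\<^sub>1t) \<cdot> t/(1+\<delta>\<^sub>2t)\<close> under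
\<open>\<nu>\<^sub>t\<close>. The fixed-point equations read \<open>x\<^sub>i\<delta>\<^sub>i = -c G(\<delta>\<^sub>i\<^sup>~)\<close> and \<open>x\<^sub>i\<delta>\<^sub>i\<^sup>~ = -H(\<delta>\<^sub>i)\<close>, and the
resolvent identities \<open>G(\<delta>\<^sub>1\<^sup>~) - G(\<delta>\<^sub>2\<^sup>~) = (\<delta>\<^sub>2\<^sup>~ - \<delta>\<^sub>1\<^sup>~) P\<close>, \<open>H(\<delta>\<^sub>1) - H(\<delta>\<^sub>2) = (\<delta>\<^sub>2 - \<delta>\<^sub>1) Q\<close> turn
the difference of the two solutions into
  \<open>(x\<^sub>1x\<^sub>2 - cPQ)(\<delta>\<^sub>2\<^sup>~ - \<delta>\<^sub>1\<^sup>~) = (x\<^sub>2 - x\<^sub>1)(H(\<delta>\<^sub>1) - \<delta>\<^sub>2 Q)\<close>.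
By Cauchy--Schwarz and the two stability conditions \<open>cPQ < x\<^sub>1x\<^sub>2\<close>. Since the whole segment
between \<open>\<delta>\<^sub>1\<close> and \<open>\<delta>\<^sub>2\<close> lies in \<open>\<D>\<close>, the factors \<open>1 + \<delta>\<^sub>1t\<close> and \<open>1 + \<delta>\<^sub>2t\<close> have the same sign
on the support of \<open>\<nu>\<^sub>t\<close>, so \<open>H(\<delta>\<^sub>1) - \<delta>\<^sub>2 Q = \<integral> t/((1+\<delta>\<^sub>1t)(1+\<delta>\<^sub>2t)) d\<nu>\<^sub>t > 0\<close> as \<open>\<nu>\<^sub>t \<noteq> \<delta>\<^sub>0\<close>.\<close>

definition resolvent_mean :: "real measure \<Rightarrow> real \<Rightarrow> real" where
  "resolvent_mean M s = (LINT t|M. t / (1 + s * t))"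

definition resolvent_cross :: "real measure \<Rightarrow> real \<Rightarrow> real \<Rightarrow> real" where
  "resolvent_cross M s s' = (LINT t|M. t / (1 + s * t) * (t / (1 + s' * t)))"

lemma AE_in_msupp:
  assumes sets_M: "sets M = sets (borel :: real measure)"
  shows "AE t in M. t \<in> msupp M"
proof -
  define I where "I = {(a, b). a \<in> \<rat> \<and> b \<in> \<rat> \<and> emeasure M {a<..<b::real} = 0}"
  have "countable I"
    by (rule countable_subset[of _ "\<rat> \<times> \<rat>"]) (auto simp: I_def intro!: countable_SIGMA countable_rat)
  then have null: "(\<Union>p\<in>I. {fst p<..<snd p}) \<in> null_sets M"
    by (rule null_sets_UN') (auto simp: I_def null_sets_def sets_M)
  show ?thesis
  proof (rule AE_I'[OF null], safe)
    fix p assume "p \<notin> msupp M"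
    then obtain U where U: "open U" "p \<in> U" "emeasure M U = 0"
      by (auto simp: msupp_def)
    then obtain e where e: "e > 0" "ball p e \<subseteq> U" by (meson open_contains_ball)
    obtain a where a: "a \<in> \<rat>" "p - e < a" "a < p" using Rats_dense_in_real[of "p - e" p] e by auto
    obtain b where b: "b \<in> \<rat>" "p < b" "b < p + e" using Rats_dense_in_real[of p "p + e"] e by auto
    have "{a<..<b} \<subseteq> U"
      using e a b by (auto simp: dist_real_def subset_iff)
    then have "emeasure M {a<..<b} \<le> emeasure M U"
      by (rule emeasure_mono) (use U sets_M in auto)
    then have "(a, b) \<in> I" using a b U by (auto simp: I_def)
    then show "p \<in> (\<Union>p\<in>I. {fst p<..<snd p})" using a b by force
  qed
qed

lemma AE_nonneg_in_msupp:
  assumes "prob_on_Rplus M"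
  shows "AE t in M. 0 \<le> t \<and> t \<in> msupp M"
proof -
  interpret prob_space M using assms by (simp add: prob_on_Rplus_def)
  have sets_M: "sets M = sets borel" using assms by (simp add: prob_on_Rplus_def)
  have "AE t in M. t \<in> {0::real..}"
    using assms by (subst AE_in_set_eq_1) (auto simp: prob_on_Rplus_def sets_M emeasure_eq_measure)
  then show ?thesis using AE_in_msupp[OF sets_M] by eventually_elim auto
qed

lemma msupp_bounded_away:
  assumes "p \<notin> msupp M"
  obtains r where "r > 0" "\<And>t. t \<in> msupp M \<Longrightarrow> r \<le> \<bar>t - p\<bar>"
proof -
  obtain U where U: "open U" "p \<in> U" "emeasure M U = 0"
    using assms by (auto simp: msupp_def)
  then obtain r where r: "r > 0" "ball p r \<subseteq> U" by (meson open_contains_ball)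
  have "r \<le> \<bar>t - p\<bar>" if "t \<in> msupp M" for t
  proof (rule ccontr)
    assume "\<not> r \<le> \<bar>t - p\<bar>"
    then have "t \<in> U" using r by (auto simp: dist_real_def)
    then show False using that U by (auto simp: msupp_def)
  qed
  with r that show ?thesis by blast
qed

text \<open>The constant is \<open>1/s\<close> for \<open>s > 0\<close>, a bound of the compact support for \<open>s = 0\<close>, and for
\<open>s < 0\<close> it comes from the gap \<open>r\<close> between the support and the pole \<open>p = -1/s > 0\<close>:
\<open>t \<le> |t - p| + p \<le> (1 + p/r) |t - p|\<close>.\<close>
lemma domD_resolvent_kernel_bounded:
  assumes "s \<in> domD M"
  obtains C where "\<And>t. t \<in> msupp M \<Longrightarrow> 0 \<le> t \<Longrightarrow> 1 + s * t \<noteq> 0 \<and> t \<le> C * \<bar>1 + s * t\<bar>"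
proof (cases s "0::real" rule: linorder_cases)
  case equal
  then have "compact (msupp M)" using assms by (auto simp: domD_def split: if_splits)
  then obtain R where "\<forall>t\<in>msupp M. norm t \<le> R" using compact_imp_bounded bounded_iff by metis
  then show ?thesis using equal by (intro that[of R]) auto
next
  case greater
  have "1 + s * t \<noteq> 0 \<and> t \<le> 1/s * \<bar>1 + s * t\<bar>" if "0 \<le> t" for t
  proof -
    have "0 < 1 + s * t" using greater that by (simp add: add_pos_nonneg)
    then show ?thesis using greater by (simp add: field_simps)
  qed
  then show ?thesis by (intro that) blast
next
  case less
  define p where "p = - inverse s"
  have p_pos: "p > 0" using less by (simp add: p_def)
  have "p \<notin> msupp M" using assms less by (auto simp: domD_def p_def split: if_splits)
  then obtain r where r: "r > 0" "\<And>t. t \<in> msupp M \<Longrightarrow> r \<le> \<bar>t - p\<bar>"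
    by (metis msupp_bounded_away)
  have "1 + s * t \<noteq> 0 \<and> t \<le> (1 + p/r) / \<bar>s\<bar> * \<bar>1 + s * t\<bar>" if t: "t \<in> msupp M" "0 \<le> t" for t
  proof
    have gap: "1 \<le> \<bar>t - p\<bar> / r" using r t by simp
    have "1 + s * t = s * (t - p)" using less by (simp add: p_def field_simps)
    then have factor: "\<bar>1 + s * t\<bar> = \<bar>s\<bar> * \<bar>t - p\<bar>" by (simp add: abs_mult)
    then show "1 + s * t \<noteq> 0" using gap less r by auto
    have "t \<le> \<bar>t - p\<bar> + p" by simp
    also have "\<dots> \<le> \<bar>t - p\<bar> + p * (\<bar>t - p\<bar> / r)"
      using mult_left_mono[OF gap] p_pos by simp
    also have "\<dots> = (1 + p/r) / \<bar>s\<bar> * \<bar>1 + s * t\<bar>"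
      using less by (simp add: factor field_simps)
    finally show "t \<le> (1 + p/r) / \<bar>s\<bar> * \<bar>1 + s * t\<bar>" .
  qed
  then show ?thesis by (rule that)
qed

lemma AE_resolvent_kernel_bounded:
  assumes "prob_on_Rplus M" "s \<in> domD M"
  obtains C where "AE t in M. 1 + s * t \<noteq> 0 \<and> \<bar>t / (1 + s * t)\<bar> \<le> C"
proof -
  obtain C where C: "\<And>t. t \<in> msupp M \<Longrightarrow> 0 \<le> t \<Longrightarrow> 1 + s * t \<noteq> 0 \<and> t \<le> C * \<bar>1 + s * t\<bar>"
    using domD_resolvent_kernel_bounded[OF assms(2)] by blast
  have "AE t in M. 1 + s * t \<noteq> 0 \<and> \<bar>t / (1 + s * t)\<bar> \<le> C"
    using AE_nonneg_in_msupp[OF assms(1)]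
  proof eventually_elim
    case (elim t)
    with C[of t] show ?case by (simp add: abs_divide pos_divide_le_eq)
  qed
  then show ?thesis by (rule that)
qed

lemma integrable_AE_bounded_borel:
  fixes f :: "real \<Rightarrow> real"
  assumes "finite_measure M" "sets M = sets borel" "f \<in> borel_measurable borel"
    and "AE t in M. \<bar>f t\<bar> \<le> B"
  shows "integrable M f"
proof (rule finite_measure.integrable_const_bound[OF assms(1)])
  show "AE t in M. norm (f t) \<le> B" using assms(4) by simp
  show "f \<in> borel_measurable M"
    unfolding measurable_cong_sets[OF assms(2) refl] by (rule assms(3))
qed

lemma prob_on_Rplus_finite_measure:
  assumes "prob_on_Rplus M"
  shows "finite_measure M"
proof -
  interpret prob_space M using assms by (simp add: prob_on_Rplus_def)
  show ?thesis by unfold_locales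
qed

lemma integrable_resolvent_kernel:
  assumes M: "prob_on_Rplus M" and s: "s \<in> domD M"
  shows "integrable M (\<lambda>t. t / (1 + s * t))"
proof -
  obtain C where "AE t in M. 1 + s * t \<noteq> 0 \<and> \<bar>t / (1 + s * t)\<bar> \<le> C"
    using AE_resolvent_kernel_bounded[OF M s] by blast
  then have "AE t in M. \<bar>t / (1 + s * t)\<bar> \<le> C" by eventually_elim simp
  with M show ?thesis
    by (intro integrable_AE_bounded_borel[OF prob_on_Rplus_finite_measure]) (auto simp: prob_on_Rplus_def)
qed

lemma integrable_resolvent_kernel_mult:
  assumes M: "prob_on_Rplus M" and s: "s \<in> domD M" and s': "s' \<in> domD M"
  shows "integrable M (\<lambda>t. t / (1 + s * t) * (t / (1 + s' * t)))"
proof -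
  obtain C where C: "AE t in M. 1 + s * t \<noteq> 0 \<and> \<bar>t / (1 + s * t)\<bar> \<le> C"
    using AE_resolvent_kernel_bounded[OF M s] by blast
  obtain C' where C': "AE t in M. 1 + s' * t \<noteq> 0 \<and> \<bar>t / (1 + s' * t)\<bar> \<le> C'"
    using AE_resolvent_kernel_bounded[OF M s'] by blast
  have "AE t in M. \<bar>t / (1 + s * t) * (t / (1 + s' * t))\<bar> \<le> C * C'"
    using C C' by eventually_elim (metis abs_mult abs_ge_zero mult_mono')
  with M show ?thesis
    by (intro integrable_AE_bounded_borel[OF prob_on_Rplus_finite_measure]) (auto simp: prob_on_Rplus_def)
qed

lemma resolvent_mean_diff:
  assumes M: "prob_on_Rplus M" and s1: "s1 \<in> domD M" and s2: "s2 \<in> domD M"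
  shows "resolvent_mean M s1 - resolvent_mean M s2 = (s2 - s1) * resolvent_cross M s1 s2"
proof -
  obtain C1 where C1: "AE t in M. 1 + s1 * t \<noteq> 0 \<and> \<bar>t / (1 + s1 * t)\<bar> \<le> C1"
    using AE_resolvent_kernel_bounded[OF M s1] by blast
  obtain C2 where C2: "AE t in M. 1 + s2 * t \<noteq> 0 \<and> \<bar>t / (1 + s2 * t)\<bar> \<le> C2"
    using AE_resolvent_kernel_bounded[OF M s2] by blast
  have "resolvent_mean M s1 - resolvent_mean M s2 = (LINT t|M. t / (1 + s1 * t) - t / (1 + s2 * t))"
    using integrable_resolvent_kernel[OF M s1] integrable_resolvent_kernel[OF M s2]
    by (simp add: resolvent_mean_def)
  also have "\<dots> = (LINT t|M. (s2 - s1) * (t / (1 + s1 * t) * (t / (1 + s2 * t))))"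
  proof (rule integral_cong_AE)
    show "(\<lambda>t. t / (1 + s1 * t) - t / (1 + s2 * t)) \<in> borel_measurable M"
      using integrable_resolvent_kernel[OF M s1] integrable_resolvent_kernel[OF M s2] by measurable
    show "(\<lambda>t. (s2 - s1) * (t / (1 + s1 * t) * (t / (1 + s2 * t)))) \<in> borel_measurable M"
      using integrable_resolvent_kernel_mult[OF M s1 s2] by measurable
    show "AE t in M. t / (1 + s1 * t) - t / (1 + s2 * t) = (s2 - s1) * (t / (1 + s1 * t) * (t / (1 + s2 * t)))"
      using C1 C2 by eventually_elim (simp add: divide_simps, simp add: algebra_simps)
  qed
  also have "\<dots> = (s2 - s1) * resolvent_cross M s1 s2"
    by (simp only: resolvent_cross_def integral_mult_right_zero)
  finally show ?thesis .
qed

lemma integral_mult_square_le: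
  fixes f g :: "'a \<Rightarrow> real"
  assumes "integrable M (\<lambda>t. f t * f t)" "integrable M (\<lambda>t. g t * g t)" "integrable M (\<lambda>t. f t * g t)"
  shows "(LINT t|M. f t * g t)\<^sup>2 \<le> (LINT t|M. f t * f t) * (LINT t|M. g t * g t)"
proof -
  define P Q R where "P = (LINT t|M. f t * f t)" "Q = (LINT t|M. f t * g t)" "R = (LINT t|M. g t * g t)"
  have quadratic: "0 \<le> P - 2 * l * Q + l\<^sup>2 * R" for l
  proof -
    have "0 \<le> (LINT t|M. (f t - l * g t)\<^sup>2)" by simp
    also have "\<dots> = (LINT t|M. f t * f t - (2 * l) * (f t * g t) + l\<^sup>2 * (g t * g t))"
      by (rule Bochner_Integration.integral_cong) (auto simp: power2_eq_square algebra_simps)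
    also have "\<dots> = P - 2 * l * Q + l\<^sup>2 * R"
      using assms by (simp add: P_Q_R_def)
    finally show ?thesis .
  qed
  show ?thesis
  proof (cases "R = 0")
    case True
    have "Q = 0"
    proof (rule ccontr)
      assume "Q \<noteq> 0"
      with True quadratic[of "(P + 1) / (2 * Q)"] show False by (simp add: field_simps)
    qed
    with True show ?thesis by (simp add: P_Q_R_def[symmetric])
  next
    case False
    have "R \<ge> 0" unfolding P_Q_R_def by (rule integral_nonneg_AE) simp
    with False have "R > 0" by simp
    with quadratic[of "Q / R"] have "Q\<^sup>2 \<le> P * R"
      by (simp add: power2_eq_square field_simps)
    then show ?thesis by (simp add: P_Q_R_def)
  qed
qed

lemma resolvent_cross_Cauchy_Schwarz:
  assumes "prob_on_Rplus M" "s1 \<in> domD M" "s2 \<in> domD M"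
  shows "(resolvent_cross M s1 s2)\<^sup>2 \<le> resolvent_cross M s1 s1 * resolvent_cross M s2 s2"
  unfolding resolvent_cross_def
  by (intro integral_mult_square_le integrable_resolvent_kernel_mult assms)

lemma resolvent_cross_diag_nonneg: "0 \<le> resolvent_cross M s s"
  unfolding resolvent_cross_def by (rule integral_nonneg_AE) simp

lemma eq_return_0_if_AE_eq_0:
  assumes "prob_on_Rplus M" and "AE t in M. t = 0"
  shows "M = return borel 0"
proof -
  interpret prob_space M using assms by (simp add: prob_on_Rplus_def)
  have sets_M: "sets M = sets borel" using assms by (simp add: prob_on_Rplus_def)
  show ?thesis
  proof (rule measure_eqI)
    fix A assume A: "A \<in> sets M"
    show "emeasure M A = emeasure (return borel 0) A"
    proof (cases "(0::real) \<in> A")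
      case True
      have "AE t in M. t \<in> A" using assms(2) by eventually_elim (use True in auto)
      then have "measure M A = 1" using A by (subst (asm) AE_in_set_eq_1) auto
      then show ?thesis using True A sets_M by (simp add: emeasure_eq_measure)
    next
      case False
      have "AE t in M. t \<notin> A" using assms(2) by eventually_elim (use False in auto)
      moreover have "{t \<in> space M. \<not> t \<notin> A} = A" using sets.sets_into_space[OF A] by auto
      ultimately have "emeasure M A = 0" using AE_iff_measurable[OF A] by simp
      then show ?thesis using False A sets_M by simp
    qed
  qed (use sets_M in simp)
qed

text \<open>For \<open>t > 0\<close> the product is \<open>t\<^sup>2 (s\<^sub>1 - q)(s\<^sub>2 - q)\<close> with \<open>q = -1/t\<close>, and \<open>q\<close> lying between
\<open>s\<^sub>1\<close> and \<open>s\<^sub>2\<close> would force \<open>t = -q\<^sup>-\<^sup>1 \<notin> msupp M\<close>.\<close>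
lemma domD_interval_denominators_pos:
  assumes interval: "{min s1 s2 .. max s1 s2} \<subseteq> domD M"
    and t: "t \<in> msupp M" "0 \<le> t"
  shows "(1 + s1 * t) * (1 + s2 * t) > 0"
proof (rule ccontr)
  assume nonpos: "\<not> (1 + s1 * t) * (1 + s2 * t) > 0"
  with t have t_pos: "t > 0" by (cases "t = 0") auto
  define q where "q = - 1 / t"
  have "(1 + s1 * t) * (1 + s2 * t) = t\<^sup>2 * ((s1 - q) * (s2 - q))"
    using t_pos by (simp add: q_def field_simps power2_eq_square)
  with nonpos t_pos have "(s1 - q) * (s2 - q) \<le> 0"
    by (metis not_le mult_pos_pos zero_less_power)
  then have "q \<in> domD M" using interval by (auto simp: mult_le_0_iff)
  moreover have "q \<noteq> 0" "- inverse q = t" using t_pos by (simp_all add: q_def)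
  ultimately show False using t by (auto simp: domD_def split: if_splits)
qed

lemma resolvent_mean_minus_cross_pos:
  assumes M: "prob_on_Rplus M" and not_dirac: "M \<noteq> return borel 0"
    and interval: "{min s1 s2 .. max s1 s2} \<subseteq> domD M"
  shows "resolvent_mean M s1 - s2 * resolvent_cross M s1 s2 > 0"
proof -
  have s1: "s1 \<in> domD M" and s2: "s2 \<in> domD M" using interval by auto
  define g where "g t = t / (1 + s1 * t) - s2 * (t / (1 + s1 * t) * (t / (1 + s2 * t)))" for t
  have g_int: "integrable M g"
    unfolding g_def by (intro Bochner_Integration.integrable_diff Bochner_Integration.integrable_mult_right
      integrable_resolvent_kernel integrable_resolvent_kernel_mult M s1 s2)
  have "resolvent_mean M s1 - s2 * resolvent_cross M s1 s2 = integral\<^sup>L M g"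
    unfolding g_def resolvent_mean_def resolvent_cross_def
    by (simp only: Bochner_Integration.integral_diff integrable_resolvent_kernel[OF M s1]
        Bochner_Integration.integrable_mult_right integrable_resolvent_kernel_mult[OF M s1 s2]
        integral_mult_right_zero)
  moreover have AE_g: "AE t in M. g t = t / ((1 + s1 * t) * (1 + s2 * t))
      \<and> 0 \<le> t \<and> (1 + s1 * t) * (1 + s2 * t) > 0"
    using AE_nonneg_in_msupp[OF M]
  proof eventually_elim
    case (elim t)
    then have pos: "(1 + s1 * t) * (1 + s2 * t) > 0"
      using domD_interval_denominators_pos[OF interval] by blast
    then have "1 + s1 * t \<noteq> 0" "1 + s2 * t \<noteq> 0" by auto
    with pos elim show ?case by (simp add: g_def divide_simps) (simp add: algebra_simps)
  qed
  then have g_nonneg: "AE t in M. 0 \<le> g t" by eventually_elim simp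
  have "\<not> (AE t in M. g t = 0)"
  proof
    assume "AE t in M. g t = 0"
    with AE_g have "AE t in M. t = 0" by eventually_elim auto
    then show False using eq_return_0_if_AE_eq_0[OF M] not_dirac by blast
  qed
  then have "integral\<^sup>L M g \<noteq> 0" using integral_nonneg_eq_0_iff_AE[OF g_int g_nonneg] by blast
  moreover have "0 \<le> integral\<^sup>L M g" using g_nonneg by (rule integral_nonneg_AE)
  ultimately show ?thesis by linarith
qed

lemma fixed_point_normal_form:
  assumes "dt \<in> domD \<nu> \<and> x \<noteq> 0
       \<and> d = c * (LINT t|\<nu>. t / (- x * (1 + dt * t)))
       \<and> d \<in> domD \<nu>t
       \<and> dt = (LINT t|\<nu>t. t / (- x * (1 + d * t)))
       \<and> 1 - x\<^sup>2 * (c * (LINT t|\<nu>. t\<^sup>2 / (x\<^sup>2 * (1 + dt * t)\<^sup>2)))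
                  * (LINT t|\<nu>t. t\<^sup>2 / (x\<^sup>2 * (1 + d * t)\<^sup>2)) > 0"
  shows "x * d = - c * resolvent_mean \<nu> dt"
    and "x * dt = - resolvent_mean \<nu>t d"
    and "c * resolvent_cross \<nu> dt dt * resolvent_cross \<nu>t d d < x\<^sup>2"
proof -
  have x: "x \<noteq> 0" using assms by blast
  have mean: "(LINT t|M. t / (- x * (1 + s * t))) = - resolvent_mean M s / x" for M s
  proof -
    have "(\<lambda>t. t / (- x * (1 + s * t))) = (\<lambda>t. - (t / (1 + s * t) / x))"
      by (simp add: divide_divide_eq_left mult.commute)
    then show ?thesis
      by (simp only: resolvent_mean_def Bochner_Integration.integral_minus integral_divide_zero)
  qed
  have cross: "(LINT t|M. t\<^sup>2 / (x\<^sup>2 * (1 + s * t)\<^sup>2)) = resolvent_cross M s s / x\<^sup>2" for M s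
  proof -
    have "(\<lambda>t. t\<^sup>2 / (x\<^sup>2 * (1 + s * t)\<^sup>2)) = (\<lambda>t. t / (1 + s * t) * (t / (1 + s * t)) / x\<^sup>2)"
      by (simp add: power2_eq_square mult_ac)
    then show ?thesis by (simp only: resolvent_cross_def integral_divide_zero)
  qed
  have d: "d = c * (- resolvent_mean \<nu> dt / x)" and dt: "dt = - resolvent_mean \<nu>t d / x"
    and stable: "0 < 1 - x\<^sup>2 * (c * (resolvent_cross \<nu> dt dt / x\<^sup>2)) * (resolvent_cross \<nu>t d d / x\<^sup>2)"
    using assms unfolding mean cross by blast+
  from x have "x * d = - c * resolvent_mean \<nu> dt" by (subst d) (simp add: field_simps)
  moreover from x have "x * dt = - resolvent_mean \<nu>t d" by (subst dt) (simp add: field_simps)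
  ultimately show "x * d = - c * resolvent_mean \<nu> dt" "x * dt = - resolvent_mean \<nu>t d" by blast+
  have "1 - x\<^sup>2 * (c * (resolvent_cross \<nu> dt dt / x\<^sup>2)) * (resolvent_cross \<nu>t d d / x\<^sup>2)
      = (x\<^sup>2 - c * resolvent_cross \<nu> dt dt * resolvent_cross \<nu>t d d) / x\<^sup>2"
    using x by (simp add: field_simps power2_eq_square)
  with stable x show "c * resolvent_cross \<nu> dt dt * resolvent_cross \<nu>t d d < x\<^sup>2"
    by (simp add: zero_less_divide_iff)
qed

lemma stable_cross_moments_less:
  fixes c x1 x2 P Q A1 A2 B1 B2 :: real
  assumes "c \<ge> 0" "0 \<le> A1" "0 \<le> A2" "0 \<le> B1" "0 \<le> B2"
    and "P\<^sup>2 \<le> A1 * A2" "Q\<^sup>2 \<le> B1 * B2"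
    and "c * A1 * B1 < x1\<^sup>2" "c * A2 * B2 < x2\<^sup>2" "x1 * x2 > 0"
  shows "c * P * Q < x1 * x2"
proof -
  have "P\<^sup>2 * Q\<^sup>2 \<le> (A1 * A2) * (B1 * B2)"
    using assms(2-7) by (intro mult_mono) auto
  then have "c\<^sup>2 * (P\<^sup>2 * Q\<^sup>2) \<le> c\<^sup>2 * ((A1 * A2) * (B1 * B2))"
    by (rule mult_left_mono) simp
  then have "(c * P * Q)\<^sup>2 \<le> (c * A1 * B1) * (c * A2 * B2)"
    by (simp add: power_mult_distrib algebra_simps power2_eq_square)
  also have "\<dots> < x1\<^sup>2 * x2\<^sup>2"
    using assms by (intro mult_strict_mono) auto
  finally have "(c * P * Q)\<^sup>2 < (x1 * x2)\<^sup>2" by (simp add: power_mult_distrib)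
  then show ?thesis by (rule power2_less_imp_less) (use assms(10) in simp)
qed

lemma fixed_point_difference_identity:
  fixes x1 x2 a1 a2 b1 b2 G1 G2 H1 H2 P Q c :: real
  assumes "x1 * b1 = - c * G1" "x2 * b2 = - c * G2" "x1 * a1 = - H1" "x2 * a2 = - H2"
    and "G1 - G2 = (a2 - a1) * P" "H1 - H2 = (b2 - b1) * Q"
  shows "(x1 * x2 - c * P * Q) * (a2 - a1) = (x2 - x1) * (H1 - b2 * Q)"
  using assms by algebra

theorem lemma3p9:
  fixes c :: real and \<nu> \<nu>t :: "real measure"
    and dt d x :: "nat \<Rightarrow> real"
  assumes c_pos: "c > 0"
    and nu: "prob_on_Rplus \<nu>" and nu_not_dirac: "\<nu> \<noteq> return borel 0"
    and nut: "prob_on_Rplus \<nu>t" and nut_not_dirac: "\<nu>t \<noteq> return borel 0"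
    and sol: "\<And>i. i \<in> {1, 2} \<Longrightarrow>
         dt i \<in> domD \<nu> \<and> x i \<noteq> 0
       \<and> d i = c * (LINT t|\<nu>. t / (- x i * (1 + dt i * t)))
       \<and> d i \<in> domD \<nu>t
       \<and> dt i = (LINT t|\<nu>t. t / (- x i * (1 + d i * t)))
       \<and> 1 - (x i)\<^sup>2 * (c * (LINT t|\<nu>. t\<^sup>2 / ((x i)\<^sup>2 * (1 + dt i * t)\<^sup>2)))
                     * (LINT t|\<nu>t. t\<^sup>2 / ((x i)\<^sup>2 * (1 + d i * t)\<^sup>2)) > 0"
    and dt_less: "dt 1 < dt 2"
    and x_same_sign: "x 1 * x 2 > 0"
    and interval: "{min (d 1) (d 2) .. max (d 1) (d 2)} \<subseteq> domD \<nu>t"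
  shows "x 1 < x 2"
proof -
  have one: "1 \<in> {1, 2::nat}" and two: "2 \<in> {1, 2::nat}" by simp_all
  note fp1 = fixed_point_normal_form[OF sol[OF one]]
  note fp2 = fixed_point_normal_form[OF sol[OF two]]
  have dom: "dt 1 \<in> domD \<nu>" "dt 2 \<in> domD \<nu>" "d 1 \<in> domD \<nu>t" "d 2 \<in> domD \<nu>t"
    using sol[OF one] sol[OF two] by blast+
  have "c * resolvent_cross \<nu> (dt 1) (dt 2) * resolvent_cross \<nu>t (d 1) (d 2) < x 1 * x 2"
    using c_pos fp1(3) fp2(3) x_same_sign resolvent_cross_diag_nonneg
      resolvent_cross_Cauchy_Schwarz[OF nu dom(1,2)] resolvent_cross_Cauchy_Schwarz[OF nut dom(3,4)]
    by (intro stable_cross_moments_less) auto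
  with dt_less have "0 < (x 1 * x 2 - c * resolvent_cross \<nu> (dt 1) (dt 2) * resolvent_cross \<nu>t (d 1) (d 2))
      * (dt 2 - dt 1)" by simp
  also have "\<dots> = (x 2 - x 1) * (resolvent_mean \<nu>t (d 1) - d 2 * resolvent_cross \<nu>t (d 1) (d 2))"
    by (rule fixed_point_difference_identity[OF fp1(1) fp2(1) fp1(2) fp2(2)
        resolvent_mean_diff[OF nu dom(1,2)] resolvent_mean_diff[OF nut dom(3,4)]])
  finally have "0 < (x 2 - x 1) * (resolvent_mean \<nu>t (d 1) - d 2 * resolvent_cross \<nu>t (d 1) (d 2))" .
  with resolvent_mean_minus_cross_pos[OF nut nut_not_dirac interval] show ?thesis
    by (simp add: zero_less_mult_iff)
qed

end
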